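(* Let $\mathcal{F}\subseteq\mathcal{P}(\omega)$ be a free filter. Assume that $h\colon Q\to Q$ is a homeomorphism of $Q=[-1,1]^\omega$ such that for every $x\in Q$, $x-h(x)\in C_\mathcal{F}$. Then $h[K_\mathcal{F}]=K_\mathcal{F}$.
   Context: A filter on $\omega$ is free if it contains all cofinite sets. $Q=[-1,1]^\omega$ is the Hilbert cube with the product topology and $Q^\circ=(-1,1)^\omega$ its pseudointerior. $K_\mathcal{F}=\{f\in Q:\forall m\in\omega\ \{n\in\omega:|f(n)|<2^{-m}\}\in\mathcal{F}\}$ and $C_\mathcal{F}=K_\mathcal{F}\cap Q^\circ$. The difference $x-h(x)$ is taken coordinatewise. *)

theory Defs
  imports "HOL-Analysis.Analysis"
begin

definition is_filter_on_nat :: "nat set set \<Rightarrow> bool" where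
  "is_filter_on_nat F \<longleftrightarrow> UNIV \<in> F \<and> {} \<notin> F \<and>
     (\<forall>A\<in>F. \<forall>B\<in>F. A \<inter> B \<in> F) \<and>
     (\<forall>A\<in>F. \<forall>B. A \<subseteq> B \<longrightarrow> B \<in> F)"

definition free_filter :: "nat set set \<Rightarrow> bool" where
  "free_filter F \<longleftrightarrow> is_filter_on_nat F \<and> (\<forall>A. finite (UNIV - A) \<longrightarrow> A \<in> F)"

definition hilbert_cube :: "(nat \<Rightarrow> real) set" where
  "hilbert_cube = {f. \<forall>n. \<bar>f n\<bar> \<le> 1}"

definition pseudointerior :: "(nat \<Rightarrow> real) set" where
  "pseudointerior = {f. \<forall>n. \<bar>f n\<bar> < 1}"

definition Q_top :: "(nat \<Rightarrow> real) topology" where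
  "Q_top = subtopology (product_topology (\<lambda>_. euclideanreal) UNIV) hilbert_cube"

definition K_F :: "nat set set \<Rightarrow> (nat \<Rightarrow> real) set" where
  "K_F F = {f \<in> hilbert_cube. \<forall>m::nat. {n. \<bar>f n\<bar> < (1/2) ^ m} \<in> F}"

definition C_F :: "nat set set \<Rightarrow> (nat \<Rightarrow> real) set" where
  "C_F F = K_F F \<inter> pseudointerior"

end

theory Submission
  imports Defs
begin

text \<open>Only surjectivity of \<open>h\<close> on \<open>Q\<close> is needed: since \<open>x - h x\<close> tends to \<open>0\<close> along \<open>F\<close>,
  \<open>x\<close> tends to \<open>0\<close> along \<open>F\<close> if and only if \<open>h x\<close> does, so \<open>h\<close> maps \<open>Q\<close> onto itself
  while preserving membership in \<open>K\<^sub>F\<close> in both directions.\<close>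

definition F_null :: "nat set set \<Rightarrow> (nat \<Rightarrow> real) \<Rightarrow> bool" where
  "F_null F a \<longleftrightarrow> (\<forall>m::nat. {n. \<bar>a n\<bar> < (1/2) ^ m} \<in> F)"

lemma K_F_iff: "f \<in> K_F F \<longleftrightarrow> f \<in> hilbert_cube \<and> F_null F f"
  unfolding K_F_def F_null_def by blast

lemma F_null_diff:
  assumes "is_filter_on_nat F" and "F_null F a" and "F_null F b"
  shows "F_null F (\<lambda>n. a n - b n)"
  unfolding F_null_def
proof
  fix m :: nat
  have "{n. \<bar>a n\<bar> < (1/2) ^ Suc m} \<inter> {n. \<bar>b n\<bar> < (1/2) ^ Suc m} \<in> F"
    using assms unfolding is_filter_on_nat_def F_null_def by blast
  moreover have "{n. \<bar>a n\<bar> < (1/2) ^ Suc m} \<inter> {n. \<bar>b n\<bar> < (1/2) ^ Suc m}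
      \<subseteq> {n. \<bar>a n - b n\<bar> < ((1::real)/2) ^ m}"
    by auto
  ultimately show "{n. \<bar>a n - b n\<bar> < (1/2) ^ m} \<in> F"
    using assms(1) unfolding is_filter_on_nat_def by blast
qed

lemma F_null_uminus_iff: "F_null F (\<lambda>n. - a n) \<longleftrightarrow> F_null F a"
  unfolding F_null_def by simp

lemma F_null_iff_of_F_null_diff:
  assumes "is_filter_on_nat F" and "F_null F (\<lambda>n. a n - b n)"
  shows "F_null F a \<longleftrightarrow> F_null F b"
proof
  assume "F_null F a"
  from F_null_diff[OF assms(1) this assms(2)] show "F_null F b" by simp
next
  assume "F_null F b"
  then have "F_null F (\<lambda>n. - b n)" by (simp add: F_null_uminus_iff)
  from F_null_diff[OF assms(1) assms(2) this] show "F_null F a" by simp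
qed

lemma image_eq_of_invariant:
  assumes "h ` S = S" and "A \<subseteq> S" and "\<And>x. x \<in> S \<Longrightarrow> h x \<in> A \<longleftrightarrow> x \<in> A"
  shows "h ` A = A"
proof
  show "h ` A \<subseteq> A"
    using assms by blast
  show "A \<subseteq> h ` A"
  proof
    fix y assume "y \<in> A"
    then obtain x where "x \<in> S" "y = h x"
      using assms(1,2) by blast
    then show "y \<in> h ` A"
      using assms(3) \<open>y \<in> A\<close> by blast
  qed
qed

theorem mainTheorem10:
  fixes F :: "nat set set" and h :: "(nat \<Rightarrow> real) \<Rightarrow> (nat \<Rightarrow> real)"
  assumes "free_filter F"
    and "homeomorphic_map Q_top Q_top h"
    and "\<forall>x\<in>hilbert_cube. (\<lambda>n. x n - h x n) \<in> C_F F"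
  shows "h ` K_F F = K_F F"
proof (rule image_eq_of_invariant)
  have "topspace Q_top = hilbert_cube"
    unfolding Q_top_def by simp
  then show onto: "h ` hilbert_cube = hilbert_cube"
    using homeomorphic_imp_surjective_map[OF assms(2)] by simp
  show "K_F F \<subseteq> hilbert_cube"
    by (simp add: K_F_iff subset_eq)
  fix x assume x: "x \<in> hilbert_cube"
  have "is_filter_on_nat F"
    using assms(1) free_filter_def by blast
  moreover have "F_null F (\<lambda>n. x n - h x n)"
    using assms(3) x unfolding C_F_def by (simp add: K_F_iff)
  ultimately have "F_null F x \<longleftrightarrow> F_null F (h x)"
    by (rule F_null_iff_of_F_null_diff)
  moreover have "h x \<in> hilbert_cube"
    using onto x by blast
  ultimately show "h x \<in> K_F F \<longleftrightarrow> x \<in> K_F F"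
    using x by (simp add: K_F_iff)
qed

end
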